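(* Let $N\ge1$, $a_i>0$ with $\sum_{i=1}^Na_i=1$, and $x_i\in\mathsf X$ with $x_i\ne x_j$ for $i\ne j$; set $\bar\mu=\sum_{i=1}^Na_i\delta_{x_i}$. Let $\mu:[0,+\infty)\to\mathcal P_2(\mathsf X)$ with $\mu_0=\bar\mu$ be such that $\#\operatorname{supp}(\mu_t)$ is finite and non-increasing in $t\ge0$. Assume that $\boldsymbol\eta\in\mathcal P(\mathrm C([0,+\infty);\mathsf X))$ satisfies $(\mathsf e_t)_\sharp\boldsymbol\eta=\mu_t$ for every $t\ge0$. Then $\boldsymbol\eta=\sum_{i=1}^Na_i\delta_{\gamma_i}$ for curves $\gamma_i\in\mathrm C([0,+\infty);\mathsf X)$ such that (P1) $\gamma_i\ne\gamma_j$ for $i\ne j$; (P2) $\gamma_i(0)=x_i$, $i=1,\dots,N$; (P3) if $\gamma_i(s)=\gamma_j(s)$ for some $s\ge0$ and $i\ne j$, then $\gamma_i(t)=\gamma_j(t)$ for every $t\ge s$. In particular, if $\boldsymbol\eta_1,\boldsymbol\eta_2\in\mathcal P(\mathrm C([0,+\infty);\mathsf X))$ satisfy $(\mathsf e_t)_\sharp\boldsymbol\eta_1=(\mathsf e_t)_\sharp\boldsymbol\eta_2=\mu_t$ for every $t\ge0$, then $\boldsymbol\eta_1=\boldsymbol\eta_2$.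
   Context: $\mathsf X$ is a separable Hilbert space; $\mathrm C([0,+\infty);\mathsf X)$ carries the topology of uniform convergence on compact sets and $\mathcal P(\cdot)$ denotes Borel probability measures; $\mathsf e_t(\gamma)=\gamma(t)$; $\operatorname{supp}$ is the support of a measure. *)

theory Defs
  imports "HOL-Analysis.Analysis" "HOL-Probability.Probability"
begin

text \<open>Curves on [0,+infinity): continuous on {0..}, and normalised to be undefined
  for negative times (so that a curve is determined by its values on [0,+infinity)).\<close>
definition curves :: "(real \<Rightarrow> 'a::topological_space) set" where
  "curves = {\<gamma>. continuous_on {0..} \<gamma> \<and> \<gamma> \<in> extensional {0..}}"

definition ucc_topology :: "(real \<Rightarrow> 'a::metric_space) topology" where
  "ucc_topology = topology (\<lambda>U. U \<subseteq> curves \<and>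
     (\<forall>\<gamma>\<in>U. \<exists>T>0. \<exists>e>0. {\<eta>\<in>curves. \<forall>t\<in>{0..T}. dist (\<eta> t) (\<gamma> t) < e} \<subseteq> U))"

definition path_borel :: "(real \<Rightarrow> 'a::metric_space) measure" where
  "path_borel = sigma curves {U. openin ucc_topology U}"

definition dirac_sum :: "'b measure \<Rightarrow> nat \<Rightarrow> (nat \<Rightarrow> real) \<Rightarrow> (nat \<Rightarrow> 'b) \<Rightarrow> 'b measure" where
  "dirac_sum M N a p = measure_of (space M) (sets M)
     (\<lambda>A. \<Sum>i<N. ennreal (a i) * indicator A (p i))"

definition msupp :: "'a::metric_space measure \<Rightarrow> 'a set" where
  "msupp m = {x. \<forall>e>0. emeasure m (ball x e) > 0}"

definition P2 :: "'a::real_normed_vector measure set" where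
  "P2 = {m. sets m = sets borel \<and> prob_space m \<and> (\<integral>\<^sup>+ x. ennreal ((norm x)\<^sup>2) \<partial>m) < \<infinity>}"

definition lifts :: "(real \<Rightarrow> 'a::real_normed_vector measure) \<Rightarrow> (real \<Rightarrow> 'a) measure \<Rightarrow> bool" where
  "lifts \<mu> \<eta> \<longleftrightarrow> prob_space \<eta> \<and> sets \<eta> = sets path_borel \<and>
     (\<forall>t\<ge>0. distr \<eta> borel (\<lambda>\<gamma>. \<gamma> t) = \<mu> t)"

end

theory Submission
  imports Defs
begin

(*
  Let S_t be the (finite) support of mu_t. Fix a time u and pick, for every atom z of mu_u,
  a curve charged by eta through z. By continuity these finitely many curves stay in disjoint
  small balls around their starting atoms for a while; since card S_q <= card S_u for q >= u,
  at rational times q close to u they exhaust S_q. A continuous curve that meets the supports at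
  all rational times therefore stays in one ball (a connectedness argument) and coincides with
  the curve through its starting atom: near u, eta-almost surely gamma(t) is a function of gamma(u).
  An induction over the real line upgrades this to all s <= t, so eta-almost every curve is
  determined by gamma(0) in {x_1, ..., x_N}; this gives eta = sum a_i delta_{gamma_i}, and two
  atoms that meet at time s stay together afterwards. For uniqueness, (eta_1 + eta_2)/2 is again
  a lift, hence also of this form, and each atom of eta_1 or eta_2 is the atom of the mixture
  starting at the same point x_i.
*)

section \<open>Continuity and induction on the real line\<close>

lemma closure_Rats_Int_greaterThanLessThan:
  fixes a b :: real
  assumes "a < b"
  shows "closure (\<rat> \<inter> {a<..<b}) = {a..b}"
proof
  have "{a<..<b} \<subseteq> closure (\<rat> \<inter> {a<..<b})"
    using open_Int_closure_subset[of "{a<..<b}" \<rat>] by (simp add: Rats_closure_real Int_commute)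
  then show "{a..b} \<subseteq> closure (\<rat> \<inter> {a<..<b})"
    using closure_minimal[of "{a<..<b}"] assms by simp
  show "closure (\<rat> \<inter> {a<..<b}) \<subseteq> {a..b}"
    using closure_mono[of "\<rat> \<inter> {a<..<b}" "{a<..<b}"] assms by auto
qed

lemma continuous_on_closure_eq:
  fixes f g :: "'a::topological_space \<Rightarrow> 'b::metric_space"
  assumes "continuous_on (closure S) f" "continuous_on (closure S) g"
    and "\<And>x. x \<in> S \<Longrightarrow> f x = g x" and "x \<in> closure S"
  shows "f x = g x"
proof -
  have "(\<lambda>x. dist (f x) (g x)) ` closure S \<subseteq> {0}"
    by (rule image_closure_subset) (use assms in \<open>auto intro: continuous_intros\<close>)
  then show ?thesis using assms(4) by auto
qed

lemma continuous_on_eq_on_Rats: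
  fixes f g :: "real \<Rightarrow> 'a::metric_space"
  assumes "continuous_on {a..b} f" "continuous_on {a..b} g" "a < b"
    and "\<And>q. q \<in> \<rat> \<Longrightarrow> a < q \<Longrightarrow> q < b \<Longrightarrow> f q = g q" and "t \<in> {a..b}"
  shows "f t = g t"
  by (rule continuous_on_closure_eq[of "\<rat> \<inter> {a<..<b}"])
     (use assms in \<open>simp_all add: closure_Rats_Int_greaterThanLessThan\<close>)

lemma real_induct_upwards:
  fixes P :: "real \<Rightarrow> bool"
  assumes "P s"
    and left: "\<And>u. s < u \<Longrightarrow> (\<And>t. s \<le> t \<Longrightarrow> t < u \<Longrightarrow> P t) \<Longrightarrow> P u"
    and right: "\<And>u. s \<le> u \<Longrightarrow> P u \<Longrightarrow> \<exists>\<delta>>0. \<forall>t. u \<le> t \<and> t < u + \<delta> \<longrightarrow> P t"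
    and "s \<le> t"
  shows "P t"
proof (rule ccontr)
  define B where "B = {t. s \<le> t \<and> \<not> P t}"
  define u where "u = Inf B"
  assume "\<not> P t"
  then have "B \<noteq> {}" using \<open>s \<le> t\<close> by (auto simp: B_def)
  have "bdd_below B" by (auto simp: B_def bdd_below_def)
  have "s \<le> u"
    unfolding u_def using \<open>B \<noteq> {}\<close> by (rule cInf_greatest) (simp add: B_def)
  have below: "P t" if "s \<le> t" "t < u" for t
  proof (rule ccontr)
    assume "\<not> P t"
    then have "t \<in> B" using that by (simp add: B_def)
    then have "u \<le> t" unfolding u_def by (rule cInf_lower[OF _ \<open>bdd_below B\<close>])
    with that show False by simp
  qed
  have "P u"
  proof (cases "s = u")
    case True
    with \<open>P s\<close> show ?thesis by simp
  next
    case False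
    with \<open>s \<le> u\<close> have "s < u" by simp
    then show ?thesis by (rule left[OF _ below])
  qed
  then obtain \<delta> where "\<delta> > 0" and above: "\<forall>t. u \<le> t \<and> t < u + \<delta> \<longrightarrow> P t"
    using right \<open>s \<le> u\<close> by blast
  have "u + \<delta> \<le> Inf B"
  proof (rule cInf_greatest[OF \<open>B \<noteq> {}\<close>])
    fix b assume "b \<in> B"
    then have "u \<le> b" unfolding u_def by (rule cInf_lower[OF _ \<open>bdd_below B\<close>])
    show "u + \<delta> \<le> b"
    proof (rule ccontr)
      assume "\<not> u + \<delta> \<le> b"
      then have "P b" using above \<open>u \<le> b\<close> by auto
      with \<open>b \<in> B\<close> show False by (simp add: B_def)
    qed
  qed
  then show False using \<open>\<delta> > 0\<close> by (simp add: u_def)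
qed

section \<open>Separated branches\<close>

lemma finite_set_separated:
  fixes Z :: "'a::metric_space set"
  assumes "finite Z"
  obtains d where "d > 0" "\<And>z w. z \<in> Z \<Longrightarrow> w \<in> Z \<Longrightarrow> z \<noteq> w \<Longrightarrow> d \<le> dist z w"
proof -
  have "finite {dist z w | z w. z \<in> Z \<and> w \<in> Z \<and> z \<noteq> w}"
    by (rule finite_subset[of _ "(\<lambda>(z, w). dist z w) ` (Z \<times> Z)"]) (use assms in auto)
  then show ?thesis
    by (intro that[of "Min (insert 1 {dist z w | z w. z \<in> Z \<and> w \<in> Z \<and> z \<noteq> w})"])
       (auto intro!: Min_le)
qed

lemma connected_subset_cball_separated:
  fixes Z :: "'a::metric_space set"
  assumes "connected C" "finite Z" "C \<subseteq> (\<Union>w\<in>Z. cball w r)"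
    and sep: "\<And>z w. z \<in> Z \<Longrightarrow> w \<in> Z \<Longrightarrow> z \<noteq> w \<Longrightarrow> 2 * r < dist z w"
    and "z \<in> Z" "c \<in> C" "c \<in> cball z r"
  shows "C \<subseteq> cball z r"
proof (rule ccontr)
  define B where "B = (\<Union>w\<in>Z-{z}. cball w r)"
  assume "\<not> C \<subseteq> cball z r"
  then have "B \<inter> C \<noteq> {}"
    using assms(3) by (auto simp: B_def)
  moreover have "cball z r \<inter> B = {}"
  proof (intro equals0I)
    fix y assume "y \<in> cball z r \<inter> B"
    then obtain w where "w \<in> Z" "w \<noteq> z" "dist z y \<le> r" "dist w y \<le> r" by (auto simp: B_def)
    then show False
      using sep[of z w] \<open>z \<in> Z\<close> dist_triangle3[of z w y] by (auto simp: dist_commute)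
  qed
  moreover have "closed B"
    using \<open>finite Z\<close> by (auto simp: B_def intro!: closed_UN)
  moreover have "C \<subseteq> cball z r \<union> B"
    using assms(3) by (auto simp: B_def)
  ultimately show False
    using \<open>connected C\<close> \<open>c \<in> C\<close> \<open>c \<in> cball z r\<close> unfolding connected_closed
    by (metis closed_cball disjoint_iff inf_bot_left)
qed

lemma continuous_on_follows_branch:
  fixes \<gamma> :: "real \<Rightarrow> 'a::metric_space" and G :: "'a \<Rightarrow> real \<Rightarrow> 'a"
  assumes "finite Z" and sep: "\<And>z w. z \<in> Z \<Longrightarrow> w \<in> Z \<Longrightarrow> z \<noteq> w \<Longrightarrow> 2 * r < dist z w"
    and close: "\<And>w q. w \<in> Z \<Longrightarrow> u < q \<Longrightarrow> q < b \<Longrightarrow> dist w (G w q) < r"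
    and on_branches: "\<And>q. q \<in> \<rat> \<Longrightarrow> u < q \<Longrightarrow> q < b \<Longrightarrow> \<gamma> q \<in> (\<lambda>w. G w q) ` Z"
    and cont: "continuous_on {u..b} \<gamma>" "continuous_on {u..b} (G z)"
    and "u < b" "z \<in> Z" "\<gamma> u = z" "t \<in> {u..b}"
  shows "\<gamma> t = G z t"
proof -
  have "r > 0"
    using close[OF \<open>z \<in> Z\<close>, of "(u + b) / 2"] \<open>u < b\<close> by (auto intro: le_less_trans[OF zero_le_dist])
  have "\<gamma> ` closure (\<rat> \<inter> {u<..<b}) \<subseteq> (\<Union>w\<in>Z. cball w r)"
  proof (rule image_closure_subset)
    show "\<gamma> ` (\<rat> \<inter> {u<..<b}) \<subseteq> (\<Union>w\<in>Z. cball w r)"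
      using on_branches close by (fastforce simp: less_imp_le)
  qed (use assms in \<open>auto simp: closure_Rats_Int_greaterThanLessThan intro!: closed_UN\<close>)
  then have "\<gamma> ` {u..b} \<subseteq> cball z r"
    using assms \<open>r > 0\<close> by (intro connected_subset_cball_separated[of _ Z, where c = z])
      (auto simp: closure_Rats_Int_greaterThanLessThan intro: connected_continuous_image)
  then have "\<gamma> q = G z q" if q: "q \<in> \<rat>" "u < q" "q < b" for q
  proof -
    obtain w where "w \<in> Z" "\<gamma> q = G w q"
      using on_branches[OF q] by blast
    moreover have "dist z (\<gamma> q) \<le> r"
      using \<open>\<gamma> ` {u..b} \<subseteq> cball z r\<close> q by (auto simp: image_subset_iff)
    ultimately show ?thesis
    proof (cases "w = z")
      case False
      have "dist z w \<le> dist z (\<gamma> q) + dist (\<gamma> q) w"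
        by (rule dist_triangle)
      also have "\<dots> < r + r"
        using \<open>dist z (\<gamma> q) \<le> r\<close> close[OF \<open>w \<in> Z\<close> q(2,3)] \<open>\<gamma> q = G w q\<close>
        by (simp add: dist_commute)
      finally show ?thesis
        using sep[OF \<open>z \<in> Z\<close> \<open>w \<in> Z\<close>] False by simp
    qed simp
  qed
  then show ?thesis
    using continuous_on_eq_on_Rats[OF cont \<open>u < b\<close> _ \<open>t \<in> {u..b}\<close>] by blast
qed

section \<open>Atoms, supports and Dirac sums\<close>

lemma AE_nonnull_imp_ex:
  assumes "AE x in M. P x" "{x\<in>space M. Q x} \<in> sets M" "emeasure M {x\<in>space M. Q x} \<noteq> 0"
  shows "\<exists>x\<in>space M. P x \<and> Q x"
proof (rule ccontr)
  assume none: "\<not> ?thesis"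
  have "AE x in M. \<not> Q x"
    using assms(1) AE_space by eventually_elim (use none in blast)
  then show False
    using assms(2,3) by (subst (asm) AE_iff_measurable[OF assms(2)]) auto
qed

lemma AE_atomD:
  assumes "AE x in M. P x" "{y} \<in> sets M" "emeasure M {y} \<noteq> 0"
  shows "P y"
proof -
  have "{x\<in>space M. x = y} = {y}"
    using sets.sets_into_space[OF assms(2)] by auto
  then show ?thesis
    using AE_nonnull_imp_ex[of P M "\<lambda>x. x = y"] assms by auto
qed

lemma null_sets_compl_msupp:
  fixes m :: "'a::{metric_space, second_countable_topology} measure"
  assumes sets: "sets m = sets borel" and fin: "finite (msupp m)"
  shows "space m - msupp m \<in> null_sets m"
proof -
  define \<F> where "\<F> = {ball x e | x e. e > 0 \<and> emeasure m (ball x e) = 0}"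
  obtain \<F>' where "\<F>' \<subseteq> \<F>" "countable \<F>'" "\<Union>\<F>' = \<Union>\<F>"
    using Lindelof[of \<F>] by (auto simp: \<F>_def)
  moreover have "B \<in> null_sets m" if "B \<in> \<F>" for B
  proof -
    obtain x e where "B = ball x e" "emeasure m (ball x e) = 0"
      using \<open>B \<in> \<F>\<close> by (auto simp: \<F>_def)
    then show ?thesis using sets by (simp add: null_sets_def)
  qed
  ultimately have "\<Union>\<F> \<in> null_sets m"
    using null_sets_UN'[of \<F>' "\<lambda>B. B" m] by (metis image_ident subset_iff)
  moreover have "space m - msupp m \<in> sets m"
    using sets fin by (simp add: sets_eq_imp_space_eq[OF sets] borel_closed finite_imp_closed Diff_eq)
  moreover have "space m - msupp m \<subseteq> \<Union>\<F>"
    by (force simp: \<F>_def msupp_def not_less)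
  ultimately show ?thesis
    by (rule null_sets_subset)
qed

lemma AE_msupp:
  fixes m :: "'a::{metric_space, second_countable_topology} measure"
  assumes "sets m = sets borel" "finite (msupp m)"
  shows "AE x in m. x \<in> msupp m"
  using null_sets_compl_msupp[OF assms] by (rule AE_I') auto

lemma emeasure_singleton_msupp_nonzero:
  fixes m :: "'a::{metric_space, second_countable_topology} measure"
  assumes sets: "sets m = sets borel" and fin: "finite (msupp m)" and "z \<in> msupp m"
  shows "emeasure m {z} \<noteq> 0"
proof -
  obtain d where "d > 0" and d: "\<And>x. x \<in> msupp m \<Longrightarrow> x \<noteq> z \<Longrightarrow> d \<le> dist z x"
    using finite_set_avoid[OF fin, of z] by blast
  have "0 < emeasure m (ball z d)"
    using \<open>z \<in> msupp m\<close> \<open>d > 0\<close> by (simp add: msupp_def)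
  also have "\<dots> \<le> emeasure m ({z} \<union> (space m - msupp m))"
  proof (rule emeasure_mono)
    show "ball z d \<subseteq> {z} \<union> (space m - msupp m)"
      using d by (force simp: sets_eq_imp_space_eq[OF sets] not_le[symmetric])
    show "{z} \<union> (space m - msupp m) \<in> sets m"
      using sets fin by (simp add: sets_eq_imp_space_eq[OF sets] borel_closed finite_imp_closed Diff_eq)
  qed
  also have "\<dots> = emeasure m {z}"
    using sets by (intro emeasure_Un_null_set null_sets_compl_msupp fin) simp
  finally show ?thesis by simp
qed

lemma sets_dirac_sum [simp]: "sets (dirac_sum M N a p) = sets M"
  unfolding dirac_sum_def by (simp add: sets.sets_measure_of_eq)

lemma emeasure_dirac_sum:
  fixes p :: "nat \<Rightarrow> 'a"
  assumes "A \<in> sets M"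
  shows "emeasure (dirac_sum M N a p) A = (\<Sum>i<N. ennreal (a i) * indicator A (p i))"
proof (rule emeasure_measure_of[OF dirac_sum_def])
  show "countably_additive (sets (dirac_sum M N a p)) (\<lambda>A. \<Sum>i<N. ennreal (a i) * indicator A (p i))"
  proof (rule countably_additiveI)
    fix A :: "nat \<Rightarrow> 'a set" assume "disjoint_family A"
    then show "(\<Sum>n. \<Sum>i<N. ennreal (a i) * indicator (A n) (p i)) =
        (\<Sum>i<N. ennreal (a i) * indicator (\<Union>n. A n) (p i))"
      by (subst suminf_sum) (simp_all add: suminf_indicator del: sum_mult_indicator)
  qed
qed (use assms sets.space_closed in \<open>auto simp: positive_def\<close>)

lemma emeasure_dirac_sum_singleton:
  assumes "inj_on p {..<N}" "i < N" "{p i} \<in> sets M"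
  shows "emeasure (dirac_sum M N a p) {p i} = ennreal (a i)"
proof -
  have "(\<Sum>j<N. ennreal (a j) * indicator {p i} (p j)) = (\<Sum>j<N. if j = i then ennreal (a i) else 0)"
    using assms(1,2) by (intro sum.cong) (auto simp: inj_on_eq_iff)
  then show ?thesis
    using assms by (simp add: emeasure_dirac_sum)
qed

lemma dirac_sum_atom:
  assumes "{y} \<in> sets M" "emeasure (dirac_sum M N a p) {y} \<noteq> 0"
  shows "\<exists>j<N. p j = y"
  using assms by (auto simp: emeasure_dirac_sum indicator_def split: if_splits intro: ccontr)

lemma dirac_sum_cong: "(\<And>i. i < N \<Longrightarrow> p i = p' i) \<Longrightarrow> dirac_sum M N a p = dirac_sum M N a p'"
  unfolding dirac_sum_def by (intro arg_cong[where f="measure_of _ _"] ext sum.cong) simp_all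

lemma dirac_sum_eqI:
  assumes sets_eq: "sets M = sets M'" and AE: "AE x in M. x \<in> p ` {..<N}" and inj: "inj_on p {..<N}"
    and sets: "\<And>i. i < N \<Longrightarrow> {p i} \<in> sets M"
    and atoms: "\<And>i. i < N \<Longrightarrow> emeasure M {p i} = ennreal (a i)"
  shows "M = dirac_sum M' N a p"
proof (rule measure_eqI)
  fix A assume A: "A \<in> sets M"
  define I where "I = {i\<in>{..<N}. p i \<in> A}"
  have "p ` I = (\<Union>i\<in>I. {p i})" by blast
  also have "\<dots> \<in> sets M"
    using sets by (intro sets.finite_UN) (auto simp: I_def)
  finally have "p ` I \<in> sets M" .
  then have "emeasure M A = emeasure M (p ` I)"
    using AE by (intro emeasure_eq_AE A) (auto simp: I_def)
  also have "\<dots> = (\<Sum>y\<in>p ` I. emeasure M {y})"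
    using sets by (intro emeasure_eq_sum_singleton) (auto simp: I_def)
  also have "\<dots> = (\<Sum>i\<in>I. emeasure M {p i})"
    using inj_on_subset[OF inj, of I] by (simp add: sum.reindex I_def subset_eq)
  also have "\<dots> = (\<Sum>i\<in>I. ennreal (a i))"
    by (rule sum.cong[OF refl]) (simp add: I_def atoms)
  also have "\<dots> = (\<Sum>i<N. ennreal (a i) * indicator A (p i))"
    unfolding I_def sum.inter_filter[OF finite_lessThan] by (rule sum.cong) (simp_all split: split_indicator)
  also have "\<dots> = emeasure (dirac_sum M' N a p) A"
    using A sets_eq by (simp add: emeasure_dirac_sum)
  finally show "emeasure M A = emeasure (dirac_sum M' N a p) A" .
qed (simp add: sets_eq)

lemma AE_dirac_sum:
  assumes "p ` {..<N} \<in> sets M"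
  shows "AE y in dirac_sum M N a p. y \<in> p ` {..<N}"
proof (rule AE_I')
  show "space (dirac_sum M N a p) - p ` {..<N} \<in> null_sets (dirac_sum M N a p)"
    using assms sets_eq_imp_space_eq[OF sets_dirac_sum[of M N a p]]
    by (auto simp: null_sets_def emeasure_dirac_sum indicator_def)
qed auto

section \<open>Mixtures of measures\<close>

definition mix_measure :: "'a measure \<Rightarrow> 'a measure \<Rightarrow> 'a measure" where
  "mix_measure M1 M2 = measure_of (space M1) (sets M1) (\<lambda>A. (emeasure M1 A + emeasure M2 A) / 2)"

lemma sets_mix_measure [simp]: "sets (mix_measure M1 M2) = sets M1"
  by (simp add: mix_measure_def sets.sets_measure_of_eq)

lemma space_mix_measure [simp]: "space (mix_measure M1 M2) = space M1"
  by (simp add: mix_measure_def sets.space_measure_of_eq)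

lemma emeasure_mix_measure:
  assumes sets: "sets M2 = sets M1" and A: "A \<in> sets M1"
  shows "emeasure (mix_measure M1 M2) A = (emeasure M1 A + emeasure M2 A) / 2"
proof (rule emeasure_measure_of[OF mix_measure_def])
  show "countably_additive (sets (mix_measure M1 M2)) (\<lambda>A. (emeasure M1 A + emeasure M2 A) / 2)"
  proof (rule countably_additiveI)
    fix F :: "nat \<Rightarrow> 'a set"
    assume "range F \<subseteq> sets (mix_measure M1 M2)" "disjoint_family F"
    then show "(\<Sum>n. (emeasure M1 (F n) + emeasure M2 (F n)) / 2) =
        (emeasure M1 (\<Union>n. F n) + emeasure M2 (\<Union>n. F n)) / 2"
      using sets by (simp add: suminf_add[symmetric] summableI suminf_emeasure)
  qed
qed (use A sets.space_closed in \<open>auto simp: positive_def\<close>)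

lemma ennreal_half_double: "(x + x) / 2 = (x :: ennreal)"
  by (simp add: mult_2_right[symmetric] ennreal_mult_divide_eq)

lemma mix_measure_idem: "mix_measure M M = M"
  by (rule measure_eqI) (simp_all add: emeasure_mix_measure ennreal_half_double)

lemma distr_mix_measure:
  assumes sets: "sets M2 = sets M1" and f: "f \<in> M1 \<rightarrow>\<^sub>M N"
  shows "distr (mix_measure M1 M2) N f = mix_measure (distr M1 N f) (distr M2 N f)"
proof (rule measure_eqI)
  fix A assume "A \<in> sets (distr (mix_measure M1 M2) N f)"
  then have A: "A \<in> sets N" by simp
  have f2: "f \<in> M2 \<rightarrow>\<^sub>M N" and f12: "f \<in> mix_measure M1 M2 \<rightarrow>\<^sub>M N"
    using f measurable_cong_sets[OF sets, of N N] measurable_cong_sets[of "mix_measure M1 M2" M1 N N]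
    by simp_all
  have "space M2 = space M1" by (rule sets_eq_imp_space_eq[OF sets])
  then show "emeasure (distr (mix_measure M1 M2) N f) A =
      emeasure (mix_measure (distr M1 N f) (distr M2 N f)) A"
    using A f f2 f12 sets
    by (simp add: emeasure_distr emeasure_mix_measure measurable_sets)
qed simp

lemma prob_space_mix_measure:
  assumes "prob_space M1" "prob_space M2" "sets M2 = sets M1"
  shows "prob_space (mix_measure M1 M2)"
proof
  have "emeasure M2 (space M1) = 1"
    using prob_space.emeasure_space_1[OF assms(2)] sets_eq_imp_space_eq[OF assms(3)] by simp
  then show "emeasure (mix_measure M1 M2) (space (mix_measure M1 M2)) = 1"
    using assms prob_space.emeasure_space_1[OF assms(1)]
    by (simp add: emeasure_mix_measure ennreal_half_double)
qed

section \<open>The path space\<close>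

definition ucc_ball :: "(real \<Rightarrow> 'a::metric_space) \<Rightarrow> real \<Rightarrow> real \<Rightarrow> (real \<Rightarrow> 'a) set" where
  "ucc_ball \<gamma> T e = {\<eta>\<in>curves. \<forall>t\<in>{0..T}. dist (\<eta> t) (\<gamma> t) < e}"

lemma istopology_ucc: "istopology (\<lambda>U. U \<subseteq> curves \<and> (\<forall>\<gamma>\<in>U. \<exists>T>0. \<exists>e>0. ucc_ball \<gamma> T e \<subseteq> U))"
  unfolding istopology_def
proof (intro conjI allI impI)
  fix S T :: "(real \<Rightarrow> 'a) set"
  assume S: "S \<subseteq> curves \<and> (\<forall>\<gamma>\<in>S. \<exists>T>0. \<exists>e>0. ucc_ball \<gamma> T e \<subseteq> S)"
    and T: "T \<subseteq> curves \<and> (\<forall>\<gamma>\<in>T. \<exists>T'>0. \<exists>e>0. ucc_ball \<gamma> T' e \<subseteq> T)"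
  then show "S \<inter> T \<subseteq> curves" by blast
  show "\<forall>\<gamma>\<in>S \<inter> T. \<exists>T'>0. \<exists>e>0. ucc_ball \<gamma> T' e \<subseteq> S \<inter> T"
  proof
    fix \<gamma> assume \<gamma>: "\<gamma> \<in> S \<inter> T"
    obtain T1 e1 where "T1 > 0" "e1 > 0" "ucc_ball \<gamma> T1 e1 \<subseteq> S"
      using S \<gamma> by blast
    moreover obtain T2 e2 where "T2 > 0" "e2 > 0" "ucc_ball \<gamma> T2 e2 \<subseteq> T"
      using T \<gamma> by blast
    moreover have "ucc_ball \<gamma> (max T1 T2) (min e1 e2) \<subseteq> ucc_ball \<gamma> T1 e1 \<inter> ucc_ball \<gamma> T2 e2"
      by (auto simp: ucc_ball_def)
    ultimately show "\<exists>T'>0. \<exists>e>0. ucc_ball \<gamma> T' e \<subseteq> S \<inter> T"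
      by (intro exI[of _ "max T1 T2"] conjI exI[of _ "min e1 e2"]) auto
  qed
next
  fix K :: "(real \<Rightarrow> 'a) set set"
  assume K: "\<forall>S\<in>K. S \<subseteq> curves \<and> (\<forall>\<gamma>\<in>S. \<exists>T>0. \<exists>e>0. ucc_ball \<gamma> T e \<subseteq> S)"
  then show "\<Union>K \<subseteq> curves" by blast
  show "\<forall>\<gamma>\<in>\<Union>K. \<exists>T>0. \<exists>e>0. ucc_ball \<gamma> T e \<subseteq> \<Union>K"
  proof
    fix \<gamma> assume "\<gamma> \<in> \<Union>K"
    then obtain S where "S \<in> K" "\<gamma> \<in> S" by blast
    with K obtain T e where "T > 0" "e > 0" "ucc_ball \<gamma> T e \<subseteq> S" by blast
    with \<open>S \<in> K\<close> show "\<exists>T>0. \<exists>e>0. ucc_ball \<gamma> T e \<subseteq> \<Union>K" by blast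
  qed
qed

lemma openin_ucc_topology:
  "openin ucc_topology U \<longleftrightarrow> U \<subseteq> curves \<and> (\<forall>\<gamma>\<in>U. \<exists>T>0. \<exists>e>0. ucc_ball \<gamma> T e \<subseteq> U)"
  unfolding ucc_topology_def ucc_ball_def[symmetric] topology_inverse'[OF istopology_ucc] ..

lemma space_path_borel: "space path_borel = curves"
  unfolding path_borel_def by (rule space_measure_of) (auto simp: openin_ucc_topology)

lemma sets_path_borel: "sets path_borel = sigma_sets curves {U. openin ucc_topology U}"
  unfolding path_borel_def by (rule sets_measure_of) (auto simp: openin_ucc_topology)

lemma measurable_eval_path_borel:
  assumes "t \<ge> 0"
  shows "(\<lambda>\<gamma>. \<gamma> t) \<in> path_borel \<rightarrow>\<^sub>M (borel :: 'a::metric_space measure)"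
proof (rule borel_measurableI)
  fix V :: "'a set"
  assume "open V"
  have "openin ucc_topology {\<gamma>\<in>curves. \<gamma> t \<in> V}"
    unfolding openin_ucc_topology
  proof (intro conjI ballI)
    fix \<gamma> assume "\<gamma> \<in> {\<gamma>\<in>curves. \<gamma> t \<in> V}"
    then obtain e where "e > 0" "ball (\<gamma> t) e \<subseteq> V"
      using \<open>open V\<close> open_contains_ball by blast
    then show "\<exists>T>0. \<exists>e>0. ucc_ball \<gamma> T e \<subseteq> {\<gamma>\<in>curves. \<gamma> t \<in> V}"
      using assms by (intro exI[of _ "t + 1"] exI[of _ e]) (auto simp: ucc_ball_def dist_commute subset_eq)
  qed auto
  then show "(\<lambda>\<gamma>. \<gamma> t) -` V \<inter> space path_borel \<in> sets path_borel"
    by (auto simp: space_path_borel sets_path_borel vimage_def Int_def conj_commute)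
qed

lemma curves_eq_on_Rats:
  fixes \<gamma> \<gamma>' :: "real \<Rightarrow> 'a::metric_space"
  assumes "\<gamma> \<in> curves" "\<gamma>' \<in> curves" and eq: "\<And>q. q \<in> \<rat> \<Longrightarrow> 0 \<le> q \<Longrightarrow> \<gamma> q = \<gamma>' q"
  shows "\<gamma> = \<gamma>'"
proof
  fix t
  show "\<gamma> t = \<gamma>' t"
  proof (cases "t \<ge> 0")
    case True
    have "continuous_on {0..t+1} \<gamma>" "continuous_on {0..t+1} \<gamma>'"
      using assms(1,2) by (auto simp: curves_def intro: continuous_on_subset)
    then show ?thesis
      by (rule continuous_on_eq_on_Rats[of 0 "t + 1"]) (use True eq in auto)
  next
    case False
    then show ?thesis using assms(1,2) by (auto simp: curves_def extensional_def)
  qed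
qed

lemma singleton_sets_path_borel:
  fixes \<gamma> :: "real \<Rightarrow> 'a::metric_space"
  assumes "\<gamma> \<in> curves"
  shows "{\<gamma>} \<in> sets path_borel"
proof -
  have "{\<gamma>} = (\<Inter>q\<in>\<rat> \<inter> {0..}. (\<lambda>\<eta>. \<eta> q) -` {\<gamma> q} \<inter> space path_borel)"
    using assms curves_eq_on_Rats[of _ \<gamma>] by (auto simp: space_path_borel)
  also have "\<dots> \<in> sets path_borel"
  proof (rule sets.countable_INT')
    show "countable (\<rat> \<inter> {0::real..})"
      by (rule countable_subset[OF _ countable_rat]) blast
    show "(\<lambda>q. (\<lambda>\<eta>. \<eta> q) -` {\<gamma> q} \<inter> space path_borel) ` (\<rat> \<inter> {0..}) \<subseteq> sets path_borel"
      by (auto intro!: measurable_sets[OF measurable_eval_path_borel] borel_closed)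
  qed auto
  finally show ?thesis .
qed

lemma measurable_eval_curves:
  assumes "sets M = sets path_borel" "t \<ge> 0"
  shows "(\<lambda>\<gamma>. \<gamma> t) \<in> M \<rightarrow>\<^sub>M (borel :: 'a::metric_space measure)"
  by (subst measurable_cong_sets[OF assms(1) refl]) (rule measurable_eval_path_borel[OF assms(2)])

lemma lifts_mix_measure:
  assumes "lifts \<mu> \<eta>1" "lifts \<mu> \<eta>2"
  shows "lifts \<mu> (mix_measure \<eta>1 \<eta>2)"
  using assms
  by (auto simp: lifts_def prob_space_mix_measure distr_mix_measure measurable_eval_curves
      mix_measure_idem)

section \<open>Lifts of marginals with non-increasing finite supports\<close>

locale nonincreasing_finite_supports =
  fixes \<mu> :: "real \<Rightarrow> 'a::{real_normed_vector, second_countable_topology} measure"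
  assumes finite_msupp: "t \<ge> 0 \<Longrightarrow> finite (msupp (\<mu> t))"
    and card_msupp_antimono: "0 \<le> s \<Longrightarrow> s \<le> t \<Longrightarrow> card (msupp (\<mu> t)) \<le> card (msupp (\<mu> s))"
begin

text \<open>Only rational times are constrained, so that almost every curve of a lift is admissible.\<close>
definition admissible :: "(real \<Rightarrow> 'a) \<Rightarrow> bool" where
  "admissible \<gamma> \<longleftrightarrow> \<gamma> \<in> curves \<and> (\<forall>q\<in>\<rat>. q \<ge> 0 \<longrightarrow> \<gamma> q \<in> msupp (\<mu> q))"

text \<open>This is where the monotonicity of the number of atoms enters.\<close>
lemma msupp_eq_image_branches:
  assumes "u \<ge> 0" "q \<in> \<rat>" "u \<le> q"
    and adm: "\<And>z. z \<in> msupp (\<mu> u) \<Longrightarrow> admissible (G z)"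
    and sep: "\<And>z w. z \<in> msupp (\<mu> u) \<Longrightarrow> w \<in> msupp (\<mu> u) \<Longrightarrow> z \<noteq> w \<Longrightarrow> 2 * r < dist z w"
    and close: "\<And>z. z \<in> msupp (\<mu> u) \<Longrightarrow> dist z (G z q) < r"
  shows "msupp (\<mu> q) = (\<lambda>z. G z q) ` msupp (\<mu> u)"
proof (rule card_seteq[symmetric])
  show "finite (msupp (\<mu> q))"
    using assms by (intro finite_msupp) simp
  show "(\<lambda>z. G z q) ` msupp (\<mu> u) \<subseteq> msupp (\<mu> q)"
    using adm assms(1-3) by (auto simp: admissible_def)
  have "inj_on (\<lambda>z. G z q) (msupp (\<mu> u))"
  proof (rule inj_onI, rule ccontr)
    fix z w assume "z \<in> msupp (\<mu> u)" "w \<in> msupp (\<mu> u)" "G z q = G w q" "z \<noteq> w"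
    then show False
      using close[of z] close[of w] sep[of z w] dist_triangle[of z w "G z q"] by (auto simp: dist_commute)
  qed
  then show "card (msupp (\<mu> q)) \<le> card ((\<lambda>z. G z q) ` msupp (\<mu> u))"
    using card_msupp_antimono[of u q] assms by (simp add: card_image)
qed

lemma admissible_nonbranching:
  assumes "u \<ge> 0" and G: "\<And>z. z \<in> msupp (\<mu> u) \<Longrightarrow> admissible (G z) \<and> G z u = z"
  obtains b where "b > u"
    "\<And>\<gamma> t. admissible \<gamma> \<Longrightarrow> \<gamma> u \<in> msupp (\<mu> u) \<Longrightarrow> t \<in> {u..b} \<Longrightarrow> \<gamma> t = G (\<gamma> u) t"
proof -
  define Z where "Z = msupp (\<mu> u)"
  have "finite Z" using finite_msupp \<open>u \<ge> 0\<close> by (simp add: Z_def)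
  then obtain d where "d > 0" and d: "\<And>z w. z \<in> Z \<Longrightarrow> w \<in> Z \<Longrightarrow> z \<noteq> w \<Longrightarrow> d \<le> dist z w"
    using finite_set_separated by metis
  define r where "r = d / 3"
  have sep: "2 * r < dist z w" if "z \<in> Z" "w \<in> Z" "z \<noteq> w" for z w
    using d[OF that] \<open>d > 0\<close> by (simp add: r_def)
  have cont: "continuous_on {0..} (G z)" if "z \<in> Z" for z
    using G that by (simp add: Z_def admissible_def curves_def)
  have "\<forall>\<^sub>F t in at_right u. dist z (G z t) < r" if "z \<in> Z" for z
  proof -
    have "(G z \<longlongrightarrow> G z u) (at_right u)"
      using cont[OF that] \<open>u \<ge> 0\<close>
      by (auto simp: continuous_on_def intro: tendsto_within_subset)
    moreover have "G z u = z" "r > 0"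
      using G that \<open>d > 0\<close> by (auto simp: Z_def r_def)
    ultimately show ?thesis
      by (auto simp: dist_commute dest: tendstoD)
  qed
  then have "\<forall>\<^sub>F t in at_right u. \<forall>z\<in>Z. dist z (G z t) < r"
    using \<open>finite Z\<close> by (intro eventually_ball_finite) auto
  then obtain b where "b > u" and close: "\<And>z t. z \<in> Z \<Longrightarrow> u < t \<Longrightarrow> t < b \<Longrightarrow> dist z (G z t) < r"
    by (auto simp: eventually_at_right_field)
  have "\<gamma> t = G (\<gamma> u) t" if "admissible \<gamma>" "\<gamma> u \<in> Z" "t \<in> {u..b}" for \<gamma> t
  proof (rule continuous_on_follows_branch[OF \<open>finite Z\<close> sep close])
    show "\<gamma> q \<in> (\<lambda>w. G w q) ` Z" if "q \<in> \<rat>" "u < q" "q < b" for q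
      using \<open>admissible \<gamma>\<close> that \<open>u \<ge> 0\<close> msupp_eq_image_branches[of u q G r] G sep close
      by (auto simp: Z_def admissible_def)
    show "continuous_on {u..b} \<gamma>" "continuous_on {u..b} (G (\<gamma> u))"
      using \<open>admissible \<gamma>\<close> cont[OF \<open>\<gamma> u \<in> Z\<close>] \<open>u \<ge> 0\<close>
      by (auto simp: admissible_def curves_def intro: continuous_on_subset)
  qed (use that \<open>b > u\<close> in auto)
  then show ?thesis
    using that \<open>b > u\<close> by (simp add: Z_def)
qed

end

locale finite_support_lift = nonincreasing_finite_supports \<mu>
  for \<mu> :: "real \<Rightarrow> 'a::{real_normed_vector, second_countable_topology} measure" +
  fixes \<eta> :: "(real \<Rightarrow> 'a) measure"
  assumes lifts: "lifts \<mu> \<eta>"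
begin

lemma sets_lift: "sets \<eta> = sets path_borel"
  using lifts by (simp add: lifts_def)

lemma space_lift: "space \<eta> = curves"
  using sets_eq_imp_space_eq[OF sets_lift] by (simp add: space_path_borel)

lemma measurable_lift_eval: "t \<ge> 0 \<Longrightarrow> (\<lambda>\<gamma>. \<gamma> t) \<in> \<eta> \<rightarrow>\<^sub>M borel"
  by (rule measurable_eval_curves[OF sets_lift])

lemma distr_lift_eval: "t \<ge> 0 \<Longrightarrow> distr \<eta> borel (\<lambda>\<gamma>. \<gamma> t) = \<mu> t"
  using lifts by (simp add: lifts_def)

lemma sets_marginal: "t \<ge> 0 \<Longrightarrow> sets (\<mu> t) = sets borel"
  using distr_lift_eval by (metis sets_distr)

lemma eval_eq_in_sets_lift: "t \<ge> 0 \<Longrightarrow> {\<gamma>\<in>space \<eta>. \<gamma> t = p} \<in> sets \<eta>"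
  using measurable_sets[OF measurable_lift_eval, of t "{p}"] by (simp add: vimage_def Int_def conj_commute)

lemma emeasure_lift_eval_eq:
  assumes "t \<ge> 0"
  shows "emeasure \<eta> {\<gamma>\<in>space \<eta>. \<gamma> t = p} = emeasure (\<mu> t) {p}"
  using emeasure_distr[OF measurable_lift_eval[OF assms], of "{p}"] distr_lift_eval[OF assms]
  by (simp add: vimage_def Int_def conj_commute)

lemma AE_lift_eval:
  assumes "t \<ge> 0" "AE y in \<mu> t. P y" "{y. P y} \<in> sets borel"
  shows "AE \<gamma> in \<eta>. P (\<gamma> t)"
proof -
  have "AE y in distr \<eta> borel (\<lambda>\<gamma>. \<gamma> t). P y"
    unfolding distr_lift_eval[OF assms(1)] by (rule assms(2))
  then show ?thesis
    using assms(3) by (subst (asm) AE_distr_iff[OF measurable_lift_eval[OF assms(1)]]) simp_all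
qed

lemma AE_lift_eval_msupp: "t \<ge> 0 \<Longrightarrow> AE \<gamma> in \<eta>. \<gamma> t \<in> msupp (\<mu> t)"
  by (rule AE_lift_eval) (simp_all add: AE_msupp sets_marginal finite_msupp borel_closed finite_imp_closed)

lemma AE_admissible: "AE \<gamma> in \<eta>. admissible \<gamma>"
proof -
  have "AE \<gamma> in \<eta>. \<forall>q\<in>\<rat> \<inter> {0..}. \<gamma> q \<in> msupp (\<mu> q)"
    by (intro AE_ball_countable' AE_lift_eval_msupp countable_subset[OF _ countable_rat]) auto
  then show ?thesis
    using AE_space by eventually_elim (auto simp: admissible_def space_lift)
qed

lemma ex_admissible_through:
  assumes "t \<ge> 0" "z \<in> msupp (\<mu> t)"
  shows "\<exists>\<gamma>. admissible \<gamma> \<and> \<gamma> t = z"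
proof -
  have "emeasure \<eta> {\<gamma>\<in>space \<eta>. \<gamma> t = z} \<noteq> 0"
    using assms by (simp add: emeasure_lift_eval_eq emeasure_singleton_msupp_nonzero sets_marginal finite_msupp)
  then show ?thesis
    using AE_nonnull_imp_ex[OF AE_admissible eval_eq_in_sets_lift[OF assms(1)]] by blast
qed

definition determines :: "real \<Rightarrow> real \<Rightarrow> bool" where
  "determines s t \<longleftrightarrow> (\<forall>p. \<exists>y. AE \<gamma> in \<eta>. \<gamma> s = p \<longrightarrow> \<gamma> t = y)"

lemma determines_refl: "determines s s"
  unfolding determines_def by blast

lemma determines_trans:
  assumes "determines s u" "determines u t"
  shows "determines s t"
  unfolding determines_def
proof
  fix p
  obtain y where y: "AE \<gamma> in \<eta>. \<gamma> s = p \<longrightarrow> \<gamma> u = y"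
    using assms(1) by (auto simp: determines_def)
  obtain y' where "AE \<gamma> in \<eta>. \<gamma> u = y \<longrightarrow> \<gamma> t = y'"
    using assms(2) by (auto simp: determines_def)
  with y have "AE \<gamma> in \<eta>. \<gamma> s = p \<longrightarrow> \<gamma> t = y'"
    by eventually_elim blast
  then show "\<exists>y. AE \<gamma> in \<eta>. \<gamma> s = p \<longrightarrow> \<gamma> t = y" ..
qed

lemma determines_right_neighbourhood:
  assumes "u \<ge> 0"
  obtains b where "b > u" "\<And>t. t \<in> {u..b} \<Longrightarrow> determines u t"
proof -
  obtain G where G: "\<And>z. z \<in> msupp (\<mu> u) \<Longrightarrow> admissible (G z) \<and> G z u = z"
    using ex_admissible_through[OF assms] by metis
  obtain b where "b > u" and follow:
    "\<And>\<gamma> t. admissible \<gamma> \<Longrightarrow> \<gamma> u \<in> msupp (\<mu> u) \<Longrightarrow> t \<in> {u..b} \<Longrightarrow> \<gamma> t = G (\<gamma> u) t"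
    using admissible_nonbranching[OF assms G] by blast
  have "determines u t" if "t \<in> {u..b}" for t
    unfolding determines_def
  proof
    fix p
    have "AE \<gamma> in \<eta>. \<gamma> u = p \<longrightarrow> \<gamma> t = G p t"
      using AE_admissible AE_lift_eval_msupp[OF assms]
      by eventually_elim (use follow that in blast)
    then show "\<exists>y. AE \<gamma> in \<eta>. \<gamma> u = p \<longrightarrow> \<gamma> t = y" ..
  qed
  with \<open>b > u\<close> show ?thesis by (rule that)
qed

lemma determines_from_left:
  assumes "0 \<le> s" "s < u" and left: "\<And>t. s \<le> t \<Longrightarrow> t < u \<Longrightarrow> determines s t"
  shows "determines s u"
  unfolding determines_def
proof
  fix p
  define R where "R = \<rat> \<inter> {s<..<u}"
  have "\<forall>q\<in>R. \<exists>y. AE \<gamma> in \<eta>. \<gamma> s = p \<longrightarrow> \<gamma> q = y"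
    using left by (simp add: R_def determines_def)
  from bchoice[OF this] obtain Y where "\<forall>q\<in>R. AE \<gamma> in \<eta>. \<gamma> s = p \<longrightarrow> \<gamma> q = Y q"
    by blast
  then have "AE \<gamma> in \<eta>. \<forall>q\<in>R. \<gamma> s = p \<longrightarrow> \<gamma> q = Y q"
    by (intro AE_ball_countable') (auto simp: R_def intro: countable_subset[OF _ countable_rat])
  define good where "good \<gamma> \<longleftrightarrow> \<gamma> \<in> curves \<and> \<gamma> s = p \<and> (\<forall>q\<in>R. \<gamma> q = Y q)" for \<gamma>
  \<comment> \<open>Good curves agree on \<open>R\<close>, hence at \<open>u\<close>, so any one of them provides the value at \<open>u\<close>.\<close>
  define \<gamma>\<^sub>0 where "\<gamma>\<^sub>0 = (SOME \<gamma>. good \<gamma>)"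
  have follows: "\<gamma> u = \<gamma>\<^sub>0 u" if "good \<gamma>" for \<gamma>
  proof (rule continuous_on_eq_on_Rats[of s u])
    have "good \<gamma>\<^sub>0"
      unfolding \<gamma>\<^sub>0_def using someI[of good \<gamma>] that .
    then show "continuous_on {s..u} \<gamma>\<^sub>0"
      and "\<And>q. q \<in> \<rat> \<Longrightarrow> s < q \<Longrightarrow> q < u \<Longrightarrow> \<gamma> q = \<gamma>\<^sub>0 q"
      using that \<open>0 \<le> s\<close> by (auto simp: good_def R_def curves_def intro: continuous_on_subset)
    show "continuous_on {s..u} \<gamma>"
      using that \<open>0 \<le> s\<close> by (auto simp: good_def curves_def intro: continuous_on_subset)
  qed (use \<open>s < u\<close> in auto)
  have "AE \<gamma> in \<eta>. \<gamma> s = p \<longrightarrow> good \<gamma>"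
    using \<open>AE \<gamma> in \<eta>. \<forall>q\<in>R. \<gamma> s = p \<longrightarrow> \<gamma> q = Y q\<close> AE_space
    by eventually_elim (auto simp: good_def space_lift)
  then have "AE \<gamma> in \<eta>. \<gamma> s = p \<longrightarrow> \<gamma> u = \<gamma>\<^sub>0 u"
    by eventually_elim (use follows in blast)
  then show "\<exists>y. AE \<gamma> in \<eta>. \<gamma> s = p \<longrightarrow> \<gamma> u = y" ..
qed

lemma determines_forward:
  assumes "0 \<le> s" "s \<le> t"
  shows "determines s t"
proof (rule real_induct_upwards[where P = "determines s"])
  show "determines s s" by (rule determines_refl)
  show "determines s u" if "s < u" "\<And>t. s \<le> t \<Longrightarrow> t < u \<Longrightarrow> determines s t" for u
    using determines_from_left \<open>0 \<le> s\<close> that by blast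
  show "\<exists>\<delta>>0. \<forall>t. u \<le> t \<and> t < u + \<delta> \<longrightarrow> determines s t" if "s \<le> u" "determines s u" for u
  proof -
    obtain b where "b > u" "\<And>t. t \<in> {u..b} \<Longrightarrow> determines u t"
      using determines_right_neighbourhood \<open>0 \<le> s\<close> \<open>s \<le> u\<close> by (metis order_trans)
    then show ?thesis
      using determines_trans[OF \<open>determines s u\<close>] by (intro exI[of _ "b - u"]) auto
  qed
qed (rule \<open>s \<le> t\<close>)

lemma ex_curve_from_start:
  assumes "emeasure \<eta> {\<gamma>\<in>space \<eta>. \<gamma> 0 = p} \<noteq> 0"
  shows "\<exists>\<Gamma>\<in>curves. \<Gamma> 0 = p \<and> (AE \<gamma> in \<eta>. \<gamma> 0 = p \<longrightarrow> \<gamma> = \<Gamma>)"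
proof -
  define R where "R = \<rat> \<inter> {0::real..}"
  have "\<forall>q\<in>R. \<exists>y. AE \<gamma> in \<eta>. \<gamma> 0 = p \<longrightarrow> \<gamma> q = y"
    using determines_forward[of 0] by (simp add: R_def determines_def)
  from bchoice[OF this] obtain Y where "\<forall>q\<in>R. AE \<gamma> in \<eta>. \<gamma> 0 = p \<longrightarrow> \<gamma> q = Y q"
    by blast
  then have AE: "AE \<gamma> in \<eta>. \<forall>q\<in>R. \<gamma> 0 = p \<longrightarrow> \<gamma> q = Y q"
    by (intro AE_ball_countable') (auto simp: R_def intro: countable_subset[OF _ countable_rat])
  obtain \<Gamma> where \<Gamma>: "\<Gamma> \<in> space \<eta>" "\<forall>q\<in>R. \<Gamma> q = Y q" "\<Gamma> 0 = p"
    using AE_nonnull_imp_ex[OF AE eval_eq_in_sets_lift assms] by auto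
  have "AE \<gamma> in \<eta>. \<gamma> 0 = p \<longrightarrow> \<gamma> = \<Gamma>"
    using AE AE_space by eventually_elim (use \<Gamma> in \<open>auto intro!: curves_eq_on_Rats simp: space_lift R_def\<close>)
  with \<Gamma> show ?thesis
    by (auto simp: space_lift)
qed

lemma emeasure_singleton_curve_from_start:
  assumes "\<Gamma> \<in> curves" "\<Gamma> 0 = p" "AE \<gamma> in \<eta>. \<gamma> 0 = p \<longrightarrow> \<gamma> = \<Gamma>"
  shows "emeasure \<eta> {\<Gamma>} = emeasure \<eta> {\<gamma>\<in>space \<eta>. \<gamma> 0 = p}"
proof (rule emeasure_eq_AE)
  show "AE \<gamma> in \<eta>. \<gamma> \<in> {\<Gamma>} \<longleftrightarrow> \<gamma> \<in> {\<gamma>\<in>space \<eta>. \<gamma> 0 = p}"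
    using assms(3) AE_space by eventually_elim (use assms(2) in auto)
qed (use assms(1) eval_eq_in_sets_lift[of 0 p] in \<open>simp_all add: sets_lift singleton_sets_path_borel\<close>)

lemma atoms_stay_together:
  assumes "{\<Gamma>1} \<in> sets \<eta>" "{\<Gamma>2} \<in> sets \<eta>" "emeasure \<eta> {\<Gamma>1} \<noteq> 0" "emeasure \<eta> {\<Gamma>2} \<noteq> 0"
    and "0 \<le> s" "s \<le> t" "\<Gamma>1 s = \<Gamma>2 s"
  shows "\<Gamma>1 t = \<Gamma>2 t"
proof -
  obtain y where y: "AE \<gamma> in \<eta>. \<gamma> s = \<Gamma>1 s \<longrightarrow> \<gamma> t = y"
    using determines_forward[OF assms(5,6)] by (auto simp: determines_def)
  have "\<Gamma>1 t = y" using AE_atomD[OF y assms(1,3)] by simp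
  moreover have "\<Gamma>2 t = y" using AE_atomD[OF y assms(2,4)] assms(7) by simp
  ultimately show ?thesis by simp
qed

lemma lift_eq_dirac_sum:
  fixes N :: nat and a :: "nat \<Rightarrow> real" and x :: "nat \<Rightarrow> 'a"
  assumes pos: "\<And>i. i < N \<Longrightarrow> a i > 0" and inj: "inj_on x {..<N}"
    and start: "\<mu> 0 = dirac_sum borel N a x"
  obtains \<Gamma> where "\<And>i. i < N \<Longrightarrow> \<Gamma> i \<in> curves" "\<And>i. i < N \<Longrightarrow> \<Gamma> i 0 = x i"
    "\<eta> = dirac_sum path_borel N a \<Gamma>" "inj_on \<Gamma> {..<N}"
proof -
  have start_mass: "emeasure \<eta> {\<gamma>\<in>space \<eta>. \<gamma> 0 = x i} = ennreal (a i)" if "i < N" for i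
    using that inj by (simp add: emeasure_lift_eval_eq start emeasure_dirac_sum_singleton)
  have "\<forall>i\<in>{..<N}. \<exists>\<Gamma>\<in>curves. \<Gamma> 0 = x i \<and> (AE \<gamma> in \<eta>. \<gamma> 0 = x i \<longrightarrow> \<gamma> = \<Gamma>)"
  proof
    fix i assume "i \<in> {..<N}"
    then show "\<exists>\<Gamma>\<in>curves. \<Gamma> 0 = x i \<and> (AE \<gamma> in \<eta>. \<gamma> 0 = x i \<longrightarrow> \<gamma> = \<Gamma>)"
      using start_mass[of i] pos[of i] by (intro ex_curve_from_start) simp
  qed
  from bchoice[OF this[unfolded Bex_def]] obtain \<Gamma> where
    \<Gamma>: "\<forall>i\<in>{..<N}. \<Gamma> i \<in> curves \<and> \<Gamma> i 0 = x i \<and> (AE \<gamma> in \<eta>. \<gamma> 0 = x i \<longrightarrow> \<gamma> = \<Gamma> i)"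
    by blast
  have sets: "{\<Gamma> i} \<in> sets \<eta>" if "i < N" for i
    using \<Gamma> that by (auto simp: sets_lift intro: singleton_sets_path_borel)
  have start_AE: "AE y in \<mu> 0. y \<in> x ` {..<N}"
    unfolding start by (rule AE_dirac_sum) (simp add: finite_imp_closed borel_closed)
  have "AE \<gamma> in \<eta>. \<gamma> 0 \<in> x ` {..<N}"
    by (rule AE_lift_eval[OF _ start_AE]) (simp_all add: finite_imp_closed borel_closed)
  moreover have "AE \<gamma> in \<eta>. \<forall>i\<in>{..<N}. \<gamma> 0 = x i \<longrightarrow> \<gamma> = \<Gamma> i"
    using \<Gamma> by (intro AE_ball_countable') auto
  ultimately have AE: "AE \<gamma> in \<eta>. \<gamma> \<in> \<Gamma> ` {..<N}"
    by eventually_elim auto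
  have "inj_on (\<lambda>i. \<Gamma> i 0) {..<N}"
    using inj \<Gamma> by (subst inj_on_cong[where g = x]) auto
  then have "inj_on \<Gamma> {..<N}"
    by (rule inj_on_imageI2[of "\<lambda>\<gamma>. \<gamma> 0", unfolded comp_def])
  moreover have "\<eta> = dirac_sum path_borel N a \<Gamma>"
  proof (rule dirac_sum_eqI[OF sets_lift AE \<open>inj_on \<Gamma> {..<N}\<close> sets])
    fix i assume "i < N"
    then show "emeasure \<eta> {\<Gamma> i} = ennreal (a i)"
      using \<Gamma> start_mass[OF \<open>i < N\<close>] emeasure_singleton_curve_from_start[of "\<Gamma> i" "x i"] by simp
  qed
  ultimately show ?thesis
    using that \<Gamma> by blast
qed

lemma lift_decomposition:
  fixes N :: nat and a :: "nat \<Rightarrow> real" and x :: "nat \<Rightarrow> 'a"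
  assumes pos: "\<And>i. i < N \<Longrightarrow> a i > 0" and inj: "inj_on x {..<N}"
    and start: "\<mu> 0 = dirac_sum borel N a x"
  shows "\<exists>\<gamma>. (\<forall>i<N. \<gamma> i \<in> curves) \<and> \<eta> = dirac_sum path_borel N a \<gamma> \<and>
           (\<forall>i<N. \<forall>j<N. i \<noteq> j \<longrightarrow> \<gamma> i \<noteq> \<gamma> j) \<and> (\<forall>i<N. \<gamma> i 0 = x i) \<and>
           (\<forall>i<N. \<forall>j<N. \<forall>s\<ge>0. i \<noteq> j \<and> \<gamma> i s = \<gamma> j s \<longrightarrow> (\<forall>t\<ge>s. \<gamma> i t = \<gamma> j t))"
proof (rule lift_eq_dirac_sum[OF assms])
  fix \<Gamma> assume \<Gamma>: "\<And>i. i < N \<Longrightarrow> \<Gamma> i \<in> curves" "\<And>i. i < N \<Longrightarrow> \<Gamma> i 0 = x i"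
    and \<eta>: "\<eta> = dirac_sum path_borel N a \<Gamma>" and "inj_on \<Gamma> {..<N}"
  have sets: "{\<Gamma> i} \<in> sets \<eta>" if "i < N" for i
    using \<Gamma>(1)[OF that] by (simp add: sets_lift singleton_sets_path_borel)
  have atoms: "emeasure \<eta> {\<Gamma> i} \<noteq> 0" if "i < N" for i
    using sets that pos[OF that] \<open>inj_on \<Gamma> {..<N}\<close>
    by (subst \<eta>) (simp add: emeasure_dirac_sum_singleton sets_lift)
  have coalesce: "\<Gamma> i t = \<Gamma> j t"
    if "i < N" "j < N" "0 \<le> s" "s \<le> t" "\<Gamma> i s = \<Gamma> j s" for i j s t
    using atoms_stay_together[OF sets[OF that(1)] sets[OF that(2)] atoms[OF that(1)] atoms[OF that(2)]
        that(3-5)] .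
  show ?thesis
  proof (intro exI[of _ \<Gamma>] conjI)
    show "\<forall>i<N. \<forall>j<N. i \<noteq> j \<longrightarrow> \<Gamma> i \<noteq> \<Gamma> j"
      using \<open>inj_on \<Gamma> {..<N}\<close> by (auto simp: inj_on_def)
    show "\<forall>i<N. \<forall>j<N. \<forall>s\<ge>0. i \<noteq> j \<and> \<Gamma> i s = \<Gamma> j s \<longrightarrow> (\<forall>t\<ge>s. \<Gamma> i t = \<Gamma> j t)"
      using coalesce by blast
  qed (use \<Gamma> \<eta> in auto)
qed

end

context nonincreasing_finite_supports
begin

lemma finite_support_liftI: "lifts \<mu> \<eta> \<Longrightarrow> finite_support_lift \<mu> \<eta>"
  by (intro finite_support_lift.intro nonincreasing_finite_supports_axioms finite_support_lift_axioms.intro)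

lemma lifts_unique:
  fixes N :: nat and a :: "nat \<Rightarrow> real" and x :: "nat \<Rightarrow> 'a"
  assumes pos: "\<And>i. i < N \<Longrightarrow> a i > 0" and inj: "inj_on x {..<N}"
    and start: "\<mu> 0 = dirac_sum borel N a x" and "lifts \<mu> \<eta>1" "lifts \<mu> \<eta>2"
  shows "\<eta>1 = \<eta>2"
proof -
  let ?\<eta> = "mix_measure \<eta>1 \<eta>2"
  note decomposition = finite_support_lift.lift_eq_dirac_sum[OF finite_support_liftI, OF _ pos inj start]
  obtain \<Gamma>1 where \<Gamma>1: "\<And>i. i < N \<Longrightarrow> \<Gamma>1 i \<in> curves" "\<And>i. i < N \<Longrightarrow> \<Gamma>1 i 0 = x i"
    "\<eta>1 = dirac_sum path_borel N a \<Gamma>1" "inj_on \<Gamma>1 {..<N}"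
    using decomposition[OF \<open>lifts \<mu> \<eta>1\<close>] by metis
  obtain \<Gamma>2 where \<Gamma>2: "\<And>i. i < N \<Longrightarrow> \<Gamma>2 i \<in> curves" "\<And>i. i < N \<Longrightarrow> \<Gamma>2 i 0 = x i"
    "\<eta>2 = dirac_sum path_borel N a \<Gamma>2" "inj_on \<Gamma>2 {..<N}"
    using decomposition[OF \<open>lifts \<mu> \<eta>2\<close>] by metis
  obtain \<Gamma> where \<Gamma>: "\<And>i. i < N \<Longrightarrow> \<Gamma> i 0 = x i" "?\<eta> = dirac_sum path_borel N a \<Gamma>"
    using decomposition[OF lifts_mix_measure[OF \<open>lifts \<mu> \<eta>1\<close> \<open>lifts \<mu> \<eta>2\<close>]] by metis
  have sets: "sets \<eta>1 = sets path_borel" "sets \<eta>2 = sets path_borel"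
    using \<open>lifts \<mu> \<eta>1\<close> \<open>lifts \<mu> \<eta>2\<close> by (simp_all add: lifts_def)
  have atom_of_mix: "\<gamma> = \<Gamma> i"
    if "i < N" "\<gamma> \<in> curves" "\<gamma> 0 = x i" "emeasure \<eta>' {\<gamma>} \<noteq> 0" "\<eta>' \<in> {\<eta>1, \<eta>2}" for \<gamma> \<eta>' i
  proof -
    have "{\<gamma>} \<in> sets path_borel"
      using that by (simp add: singleton_sets_path_borel)
    moreover from this have "emeasure ?\<eta> {\<gamma>} \<noteq> 0"
      using that sets by (auto simp: emeasure_mix_measure)
    ultimately obtain j where "j < N" "\<Gamma> j = \<gamma>"
      using dirac_sum_atom[of \<gamma> path_borel N a \<Gamma>] \<Gamma>(2) by auto
    moreover from this have "j = i"
      using \<Gamma>(1) that inj by (metis inj_onD lessThan_iff)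
    ultimately show ?thesis by simp
  qed
  have "emeasure \<eta>1 {\<Gamma>1 i} \<noteq> 0" "emeasure \<eta>2 {\<Gamma>2 i} \<noteq> 0" if "i < N" for i
    using \<Gamma>1 \<Gamma>2 that pos[OF that]
    by (simp_all add: emeasure_dirac_sum_singleton singleton_sets_path_borel)
  then have "\<Gamma>1 i = \<Gamma>2 i" if "i < N" for i
    using atom_of_mix[of i "\<Gamma>1 i" \<eta>1] atom_of_mix[of i "\<Gamma>2 i" \<eta>2] \<Gamma>1 \<Gamma>2 that by simp
  then show ?thesis
    using \<Gamma>1(3) \<Gamma>2(3) by (simp cong: dirac_sum_cong)
qed

end

theorem theoremB1:
  fixes N :: nat and a :: "nat \<Rightarrow> real" and x :: "nat \<Rightarrow> 'a::{real_inner, polish_space}"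
    and \<mu> :: "real \<Rightarrow> 'a measure"
  assumes "N \<ge> 1"
    and "\<forall>i<N. a i > 0"
    and "(\<Sum>i<N. a i) = 1"
    and "\<forall>i<N. \<forall>j<N. i \<noteq> j \<longrightarrow> x i \<noteq> x j"
    and "\<forall>t\<ge>0. \<mu> t \<in> P2"
    and "\<mu> 0 = dirac_sum borel N a x"
    and "\<forall>t\<ge>0. finite (msupp (\<mu> t))"
    and "\<forall>s t. 0 \<le> s \<longrightarrow> s \<le> t \<longrightarrow> card (msupp (\<mu> t)) \<le> card (msupp (\<mu> s))"
  shows "(\<forall>\<eta>. lifts \<mu> \<eta> \<longrightarrow>
           (\<exists>\<gamma>. (\<forall>i<N. \<gamma> i \<in> curves) \<and> \<eta> = dirac_sum path_borel N a \<gamma> \<and>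
              (\<forall>i<N. \<forall>j<N. i \<noteq> j \<longrightarrow> \<gamma> i \<noteq> \<gamma> j) \<and>
              (\<forall>i<N. \<gamma> i 0 = x i) \<and>
              (\<forall>i<N. \<forall>j<N. \<forall>s\<ge>0. i \<noteq> j \<and> \<gamma> i s = \<gamma> j s \<longrightarrow>
                  (\<forall>t\<ge>s. \<gamma> i t = \<gamma> j t))))
       \<and> (\<forall>\<eta>1 \<eta>2. lifts \<mu> \<eta>1 \<and> lifts \<mu> \<eta>2 \<longrightarrow> \<eta>1 = \<eta>2)"
proof -
  interpret nonincreasing_finite_supports \<mu>
    using assms(7,8) by unfold_locales auto
  have pos: "\<And>i. i < N \<Longrightarrow> a i > 0" and inj: "inj_on x {..<N}"
    using assms(2,4) by (auto simp: inj_on_def)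
  note decomposition = finite_support_lift.lift_decomposition[OF finite_support_liftI, OF _ pos inj assms(6)]
  show ?thesis
    by (intro conjI allI impI decomposition) (auto intro: lifts_unique[OF pos inj assms(6)])
qed

end
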